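(* Let $n\ge 3$ and let $W_n^0$ be the wheel graph: vertex set $\{0,1,\dots,n\}$, edges $\{i,i+1\}$ for $1\le i<n$, the edge $\{n,1\}$, and the edges $\{0,i\}$ for $i\in[n]$ (all simple), rooted at the sink $0$. A configuration $c=(c_1,\dots,c_n)$ on $W_n^0$ is strongly recurrent if and only if $c\in\{1,2\}^n$ and $|\{i\in[n]: c_i=1\}|\le 1$. In particular $|\mathrm{SR}(W_n^0)|=|\mathrm{PPF}(W_n^0)|=n+1$.
   Context: For a rooted graph $G=(\Gamma,s)$ (finite, undirected, loopless multigraph with sink $s$), $V$ is the vertex set, $\tilde V=V\setminus\{s\}$, $\mathrm{mult}(vw)$ the number of edges between $v,w$, $\deg^A(v)=\sum_{w\in A}\mathrm{mult}(vw)$, $\deg(v)=\deg^V(v)$, $\mathbf 1_w$ the indicator of $w$. A configuration is $c:\tilde V\to\mathbb{Z}$ (written $c_i=c(i)$); stable if $c(v)<\deg(v)$ for all $v$. A stable $c$ is recurrent if there is no nonempty $F\subseteq\tilde V$ with $c(v)<\deg^F(v)$ for all $v\in F$. $V_M(c)=\{v\in\tilde V: c(v)\ge\deg(v)-\mathrm{mult}(vs)\}$; $c^{v-}=c-\sum_{w\in\tilde V\setminus\{v\}}\mathrm{mult}(ws)\mathbf 1_w$. A recurrent $c$ is strongly recurrent if $c^{v-}$ is recurrent for all $v\in V_M(c)$; $\mathrm{SR}(G)$ is their set. A $G$-parking function is $p:\tilde V\to\{1,2,\dots\}$ such that every nonempty $S\subseteq\tilde V$ contains $v$ with $p(v)\le\deg^{V\setminus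 S}(v)$. With $G^A$ the induced subgraph on $A\cup\{s\}$ rooted at $s$, $p$ is decomposable w.r.t. an ordered partition $(A,B)$ of $\tilde V$ into nonempty blocks if $p|_A$ is a $G^A$-parking function and $v\mapsto p(v)-\deg^A(v)$ on $B$ is a $G^B$-parking function; $p$ is prime if it is decomposable w.r.t. no such partition; $\mathrm{PPF}(G)$ is the set of prime $G$-parking functions. *)

theory Defs
  imports Main
begin

text \<open>A rooted multigraph is given by a finite vertex set V (of naturals), a sink s \<in> V,
  and a symmetric edge multiplicity function mult (mult v v = 0).
  Configurations and parking functions are functions nat \<Rightarrow> int; only their values
  on V - {s} matter for the predicates.  For the sets SR and PPF we require the value 0
  outside V - {s} so that each object on V - {s} is represented exactly once.\<close>

definition degA :: "(nat \<Rightarrow> nat \<Rightarrow> nat) \<Rightarrow> nat set \<Rightarrow> nat \<Rightarrow> int" where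
  "degA mult A v = (\<Sum>w\<in>A. int (mult v w))"

definition stable_cfg :: "nat set \<Rightarrow> nat \<Rightarrow> (nat \<Rightarrow> nat \<Rightarrow> nat) \<Rightarrow> (nat \<Rightarrow> int) \<Rightarrow> bool" where
  "stable_cfg V s mult c \<longleftrightarrow> (\<forall>v\<in>V - {s}. c v < degA mult V v)"

definition recurrent_cfg :: "nat set \<Rightarrow> nat \<Rightarrow> (nat \<Rightarrow> nat \<Rightarrow> nat) \<Rightarrow> (nat \<Rightarrow> int) \<Rightarrow> bool" where
  "recurrent_cfg V s mult c \<longleftrightarrow> stable_cfg V s mult c \<and>
     \<not> (\<exists>F. F \<noteq> {} \<and> F \<subseteq> V - {s} \<and> (\<forall>v\<in>F. c v < degA mult F v))"

definition VM :: "nat set \<Rightarrow> nat \<Rightarrow> (nat \<Rightarrow> nat \<Rightarrow> nat) \<Rightarrow> (nat \<Rightarrow> int) \<Rightarrow> nat set" where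
  "VM V s mult c = {v \<in> V - {s}. c v \<ge> degA mult V v - int (mult v s)}"

definition cfg_minus :: "nat set \<Rightarrow> nat \<Rightarrow> (nat \<Rightarrow> nat \<Rightarrow> nat) \<Rightarrow> (nat \<Rightarrow> int) \<Rightarrow> nat \<Rightarrow> (nat \<Rightarrow> int)" where
  "cfg_minus V s mult c v = (\<lambda>u. c u - (\<Sum>w\<in>V - {s} - {v}. int (mult w s) * (if u = w then 1 else 0)))"

definition strongly_recurrent :: "nat set \<Rightarrow> nat \<Rightarrow> (nat \<Rightarrow> nat \<Rightarrow> nat) \<Rightarrow> (nat \<Rightarrow> int) \<Rightarrow> bool" where
  "strongly_recurrent V s mult c \<longleftrightarrow> recurrent_cfg V s mult c \<and>
     (\<forall>v\<in>VM V s mult c. recurrent_cfg V s mult (cfg_minus V s mult c v))"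

definition SR :: "nat set \<Rightarrow> nat \<Rightarrow> (nat \<Rightarrow> nat \<Rightarrow> nat) \<Rightarrow> (nat \<Rightarrow> int) set" where
  "SR V s mult = {c. strongly_recurrent V s mult c \<and> (\<forall>u. u \<notin> V - {s} \<longrightarrow> c u = 0)}"

definition parking_fn :: "nat set \<Rightarrow> nat \<Rightarrow> (nat \<Rightarrow> nat \<Rightarrow> nat) \<Rightarrow> (nat \<Rightarrow> int) \<Rightarrow> bool" where
  "parking_fn V s mult p \<longleftrightarrow> (\<forall>v\<in>V - {s}. p v \<ge> 1) \<and>
     (\<forall>S. S \<noteq> {} \<and> S \<subseteq> V - {s} \<longrightarrow> (\<exists>v\<in>S. p v \<le> degA mult (V - S) v))"

text \<open>Decomposability w.r.t. the ordered partition (A,B) of V - {s}; the induced subgraph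
  G^A has vertex set A \<union> {s} (multiplicities inherited), rooted at s.\<close>
definition decomposable :: "nat set \<Rightarrow> nat \<Rightarrow> (nat \<Rightarrow> nat \<Rightarrow> nat) \<Rightarrow> (nat \<Rightarrow> int) \<Rightarrow> nat set \<Rightarrow> nat set \<Rightarrow> bool" where
  "decomposable V s mult p A B \<longleftrightarrow> A \<noteq> {} \<and> B \<noteq> {} \<and> A \<inter> B = {} \<and> A \<union> B = V - {s} \<and>
     parking_fn (A \<union> {s}) s mult p \<and>
     parking_fn (B \<union> {s}) s mult (\<lambda>v. p v - degA mult A v)"

definition prime_parking_fn :: "nat set \<Rightarrow> nat \<Rightarrow> (nat \<Rightarrow> nat \<Rightarrow> nat) \<Rightarrow> (nat \<Rightarrow> int) \<Rightarrow> bool" where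
  "prime_parking_fn V s mult p \<longleftrightarrow> parking_fn V s mult p \<and>
     \<not> (\<exists>A B. decomposable V s mult p A B)"

definition PPF :: "nat set \<Rightarrow> nat \<Rightarrow> (nat \<Rightarrow> nat \<Rightarrow> nat) \<Rightarrow> (nat \<Rightarrow> int) set" where
  "PPF V s mult = {p. prime_parking_fn V s mult p \<and> (\<forall>u. u \<notin> V - {s} \<longrightarrow> p u = 0)}"

definition wheel_mult :: "nat \<Rightarrow> nat \<Rightarrow> nat \<Rightarrow> nat" where
  "wheel_mult n i j =
     (if (i = 0 \<and> 1 \<le> j \<and> j \<le> n) \<or> (j = 0 \<and> 1 \<le> i \<and> i \<le> n) \<or>
         (1 \<le> i \<and> i \<le> n \<and> 1 \<le> j \<and> j \<le> n \<and>
           (j = i + 1 \<or> i = j + 1 \<or> (i = 1 \<and> j = n) \<or> (i = n \<and> j = 1)))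
      then 1 else 0)"

end

theory Submission
  imports Defs "HOL-Combinatorics.Cycles"
begin

(* Each rim vertex of the wheel has degree 3: the sink and its two rim neighbours.  If d >= 0 on
   the rim has at most one zero, the only set that can be forbidden for d is the whole rim, since
   a proper part of the rim has an end on either side where d would have to vanish.  For strong
   recurrence, c^{v-} lowers c by one away from a vertex v with c v = 2, so recurrence of c^{v-}
   forces c >= 1, and two 1's of c would leave a forbidden arc in c^{v-}; conversely, for c in
   {1,2}^n with at most one 1 the observation above makes c and every c^{v-} recurrent.

   A parking function p has some value 1, and a maximal run of 1's splits off as a
   decomposition unless it covers all of the rim but one vertex, which then carries 2.  Rotating
   the wheel, an automorphism fixing the sink, moves any value other than 1 to the vertex n, so
   prime parking functions are the p in {1,2}^n with at most one 2.  Both families are fixed by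
   the position of at most one marked vertex, hence have n + 1 members. *)

lemma exists_maximal_run:
  fixes P :: "nat \<Rightarrow> bool"
  assumes "P v" "1 \<le> v" "v < m" "\<not> P m"
  obtains j k where "1 \<le> j" "j \<le> k" "k < m" "\<forall>l\<in>{j..k}. P l"
    "\<not> P (Suc k)" "j = 1 \<or> \<not> P (j - 1)"
proof -
  define i where "i = (LEAST i. v < i \<and> \<not> P i)"
  have "v < i \<and> \<not> P i"
    unfolding i_def by (rule LeastI[of _ m]) (use assms in auto)
  moreover have "i \<le> m"
    unfolding i_def by (rule Least_le) (use assms in auto)
  ultimately obtain k where k: "i = Suc k" "v \<le> k" "\<not> P (Suc k)" "k < m"
    by (cases i) auto
  have right: "P l" if "v \<le> l" "l \<le> k" for l
    using that not_less_Least[of l "\<lambda>i. v < i \<and> \<not> P i"] \<open>P v\<close>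
    unfolding i_def[symmetric] k(1) by (cases "l = v") auto
  define j where "j = (LEAST j. 1 \<le> j \<and> (\<forall>l\<in>{j..v}. P l))"
  have "1 \<le> j \<and> (\<forall>l\<in>{j..v}. P l)"
    unfolding j_def by (rule LeastI[of _ v]) (use assms in auto)
  moreover have "j \<le> v"
    unfolding j_def by (rule Least_le) (use assms in auto)
  ultimately have j: "1 \<le> j" "j \<le> v" "\<And>l. j \<le> l \<Longrightarrow> l \<le> v \<Longrightarrow> P l"
    by auto
  have "j = 1 \<or> \<not> P (j - 1)"
  proof (rule ccontr)
    assume "\<not> (j = 1 \<or> \<not> P (j - 1))"
    moreover have "l = j - 1 \<or> j \<le> l" if "j - 1 \<le> l" for l
      using that by linarith
    ultimately have "1 \<le> j - 1 \<and> (\<forall>l\<in>{j - 1..v}. P l)"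
      using j by fastforce
    then have "j \<le> j - 1"
      unfolding j_def by (rule Least_le)
    with j(1) show False
      by linarith
  qed
  moreover have "\<forall>l\<in>{j..k}. P l"
    using j right by (meson atLeastAtMost_iff nat_le_linear)
  ultimately show ?thesis
    using that[of j k] j k by simp
qed

lemma card_filter_le_1_unique:
  assumes "card {i \<in> R. P i} \<le> 1" "finite R" "x \<in> R" "y \<in> R" "P x" "P y"
  shows "x = y"
  using assms card_le_Suc0_iff_eq[of "{i \<in> R. P i}"] by auto

lemma card_functions_at_most_one_value:
  fixes a b :: "'b::zero"
  assumes "finite R" and "a \<noteq> b"
  shows "card {c :: 'a \<Rightarrow> 'b. (\<forall>i\<in>R. c i \<in> {a, b}) \<and> card {i \<in> R. c i = a} \<le> 1
            \<and> (\<forall>u. u \<notin> R \<longrightarrow> c u = 0)} = card R + 1"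
proof -
  define mark where "mark k = (\<lambda>i. if i \<in> R then if i = k then a else b else 0)" for k
  define none where "none = (\<lambda>i. if i \<in> R then b else (0::'b))"
  let ?C = "{c. (\<forall>i\<in>R. c i \<in> {a, b}) \<and> card {i \<in> R. c i = a} \<le> 1 \<and> (\<forall>u. u \<notin> R \<longrightarrow> c u = 0)}"
  have "?C \<subseteq> insert none (mark ` R)"
  proof
    fix c assume c: "c \<in> ?C"
    then have unique: "x = y" if "x \<in> R" "y \<in> R" "c x = a" "c y = a" for x y
      using that \<open>finite R\<close> by (auto intro: card_filter_le_1_unique)
    show "c \<in> insert none (mark ` R)"
    proof (cases "\<exists>k\<in>R. c k = a")
      case True
      then obtain k where "k \<in> R" "c k = a"
        by blast
      with c unique have "c = mark k"
        unfolding mark_def by (fastforce simp: fun_eq_iff)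
      with \<open>k \<in> R\<close> show ?thesis
        by blast
    next
      case False
      with c have "c = none"
        unfolding none_def by (fastforce simp: fun_eq_iff)
      then show ?thesis
        by blast
    qed
  qed
  moreover have "insert none (mark ` R) \<subseteq> ?C"
  proof -
    have "{i \<in> R. mark k i = a} \<subseteq> {k}" for k
      using \<open>a \<noteq> b\<close> unfolding mark_def by auto
    then have "card {i \<in> R. mark k i = a} \<le> 1" for k
      using card_mono[of "{k}"] by fastforce
    then show ?thesis
      using \<open>a \<noteq> b\<close> by (auto simp: mark_def none_def split: if_splits)
  qed
  ultimately have "?C = insert none (mark ` R)"
    by blast
  moreover have "none \<notin> mark ` R"
  proof
    assume "none \<in> mark ` R"
    then obtain k where "k \<in> R" "none k = mark k k"
      by auto
    with \<open>a \<noteq> b\<close> show False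
      by (simp add: mark_def none_def)
  qed
  moreover have "inj_on mark R"
    using \<open>a \<noteq> b\<close> by (auto simp: inj_on_def mark_def fun_eq_iff split: if_splits)
  ultimately show ?thesis
    using \<open>finite R\<close> by (simp add: card_image)
qed

section \<open>Rooted graphs\<close>

lemma recurrent_cfg_nonneg:
  assumes "recurrent_cfg V s M c" and "v \<in> V - {s}" and "M v v = 0"
  shows "0 \<le> c v"
proof (rule ccontr)
  assume "\<not> 0 \<le> c v"
  then have "\<forall>u\<in>{v}. c u < degA M {v} u"
    using \<open>M v v = 0\<close> by (simp add: degA_def)
  with assms show False
    unfolding recurrent_cfg_def by blast
qed

lemma parking_fn_le_mult_sinkI:
  assumes "finite W" "s \<in> W" and "\<forall>v\<in>W - {s}. 1 \<le> p v \<and> p v \<le> int (M v s)"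
  shows "parking_fn W s M p"
  unfolding parking_fn_def
proof (intro conjI allI impI ballI)
  fix S assume S: "S \<noteq> {} \<and> S \<subseteq> W - {s}"
  then obtain v where v: "v \<in> S"
    by blast
  have "int (M v s) \<le> degA M (W - S) v"
    unfolding degA_def using assms S by (intro member_le_sum) auto
  with v S assms show "\<exists>v\<in>S. p v \<le> degA M (W - S) v"
    by force
qed (use assms in auto)

(* The parking condition on G^B is inherited from p, since deg^(V - S) splits as
   deg^A + deg^((B \<union> {s}) - S). *)
lemma decomposableI:
  assumes "finite V" and "s \<in> V" and park: "parking_fn V s M p"
    and "A \<noteq> {}" "B \<noteq> {}" and disj: "A \<inter> B = {}" and AB: "A \<union> B = V - {s}"
    and "parking_fn (A \<union> {s}) s M p"
    and pos: "\<forall>v\<in>B. 1 \<le> p v - degA M A v"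
  shows "decomposable V s M p A B"
proof -
  have "\<exists>v\<in>S. p v - degA M A v \<le> degA M (B \<union> {s} - S) v"
    if S: "S \<noteq> {}" "S \<subseteq> B \<union> {s} - {s}" for S
  proof -
    have "S \<subseteq> V - {s}"
      using S AB by blast
    then obtain v where "v \<in> S" "p v \<le> degA M (V - S) v"
      using park S(1) unfolding parking_fn_def by blast
    moreover have "degA M (V - S) v = degA M A v + degA M (B \<union> {s} - S) v"
    proof -
      have "V - S = A \<union> (B \<union> {s} - S)" "A \<inter> (B \<union> {s} - S) = {}"
        using \<open>s \<in> V\<close> disj AB S by blast+
      moreover have "finite A" "finite (B \<union> {s} - S)"
        using \<open>finite V\<close> AB by (auto intro: finite_subset)
      ultimately show ?thesis
        unfolding degA_def by (simp add: sum.union_disjoint)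
    qed
    ultimately show ?thesis
      by force
  qed
  with pos have "parking_fn (B \<union> {s}) s M (\<lambda>v. p v - degA M A v)"
    unfolding parking_fn_def by auto
  with assms show ?thesis
    unfolding decomposable_def by blast
qed

lemma degA_image:
  assumes "inj \<sigma>" and "\<And>x y. M (\<sigma> x) (\<sigma> y) = M x y"
  shows "degA M (\<sigma> ` X) (\<sigma> u) = degA M X u"
  using assms by (simp add: degA_def sum.reindex inj_on_subset[OF assms(1)])

lemma parking_fn_image:
  assumes inj: "inj \<sigma>" and "\<sigma> s = s" and M: "\<And>x y. M (\<sigma> x) (\<sigma> y) = M x y"
    and park: "parking_fn W s M (p \<circ> \<sigma>)"
  shows "parking_fn (\<sigma> ` W) s M p"
  unfolding parking_fn_def
proof (intro conjI allI impI ballI)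
  fix v assume "v \<in> \<sigma> ` W - {s}"
  then show "1 \<le> p v"
    using park \<open>\<sigma> s = s\<close> unfolding parking_fn_def by auto
next
  fix S assume S: "S \<noteq> {} \<and> S \<subseteq> \<sigma> ` W - {s}"
  define T where "T = {w \<in> W. \<sigma> w \<in> S}"
  have S_eq: "S = \<sigma> ` T"
    using S unfolding T_def by blast
  have "T \<noteq> {} \<and> T \<subseteq> W - {s}"
    using S \<open>\<sigma> s = s\<close> unfolding T_def by auto
  then obtain w where "w \<in> T" and "(p \<circ> \<sigma>) w \<le> degA M (W - T) w"
    using park unfolding parking_fn_def by blast
  moreover have "\<sigma> ` W - S = \<sigma> ` (W - T)"
    using inj unfolding S_eq by (simp add: image_set_diff)
  ultimately show "\<exists>v\<in>S. p v \<le> degA M (\<sigma> ` W - S) v"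
    unfolding S_eq by (auto simp: degA_image[where M = M, OF inj M])
qed

lemma decomposable_image:
  assumes inj: "inj \<sigma>" and fix_s: "\<sigma> s = s" and M: "\<And>x y. M (\<sigma> x) (\<sigma> y) = M x y"
    and dec: "decomposable V s M (p \<circ> \<sigma>) A B"
  shows "decomposable (\<sigma> ` V) s M p (\<sigma> ` A) (\<sigma> ` B)"
proof -
  note park_image = parking_fn_image[where M = M, OF inj fix_s M]
  have B_fun: "(\<lambda>v. (p \<circ> \<sigma>) v - degA M A v) = (\<lambda>w. p w - degA M (\<sigma> ` A) w) \<circ> \<sigma>"
    by (simp add: fun_eq_iff degA_image[where M = M, OF inj M])
  have "\<sigma> ` (A \<union> {s}) = \<sigma> ` A \<union> {s}" "\<sigma> ` (B \<union> {s}) = \<sigma> ` B \<union> {s}"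
    using fix_s by auto
  then have "parking_fn (\<sigma> ` A \<union> {s}) s M p"
    and "parking_fn (\<sigma> ` B \<union> {s}) s M (\<lambda>w. p w - degA M (\<sigma> ` A) w)"
    using dec park_image unfolding decomposable_def B_fun by metis+
  moreover have "\<sigma> ` A \<inter> \<sigma> ` B = {}"
    using dec unfolding decomposable_def by (simp flip: image_Int[OF inj])
  moreover have "\<sigma> ` A \<union> \<sigma> ` B = \<sigma> ` V - {s}"
    using dec fix_s unfolding decomposable_def by (simp add: image_set_diff[OF inj] flip: image_Un)
  ultimately show ?thesis
    using dec unfolding decomposable_def by blast
qed

lemma prime_parking_fn_comp_permutes:
  assumes perm: "\<sigma> permutes (V - {s})" and M: "\<And>x y. M (\<sigma> x) (\<sigma> y) = M x y"
    and prime: "prime_parking_fn V s M p"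
  shows "prime_parking_fn V s M (p \<circ> \<sigma>)"
proof -
  have inv_perm: "inv \<sigma> permutes (V - {s})"
    using perm by (rule permutes_inv)
  have M_inv: "M (inv \<sigma> x) (inv \<sigma> y) = M x y" for x y
    using M[of "inv \<sigma> x" "inv \<sigma> y"] by (simp add: permutes_inverses[OF perm])
  have "parking_fn V s M ((p \<circ> \<sigma>) \<circ> inv \<sigma>)"
    using prime by (simp add: prime_parking_fn_def comp_def permutes_inverses[OF perm])
  from parking_fn_image[where M = M, OF permutes_inj[OF inv_perm] _ M_inv this]
  have "parking_fn V s M (p \<circ> \<sigma>)"
    by (simp add: permutes_not_in[OF inv_perm] permutes_image[OF permutes_subset[OF inv_perm]])
  moreover have "\<not> decomposable V s M (p \<circ> \<sigma>) A B" for A B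
  proof
    assume "decomposable V s M (p \<circ> \<sigma>) A B"
    from decomposable_image[where M = M, OF permutes_inj[OF perm] _ M this]
    have "decomposable V s M p (\<sigma> ` A) (\<sigma> ` B)"
      by (simp add: permutes_not_in[OF perm] permutes_image[OF permutes_subset[OF perm]])
    then show False
      using prime unfolding prime_parking_fn_def by blast
  qed
  ultimately show ?thesis
    unfolding prime_parking_fn_def by blast
qed

section \<open>The rim of the wheel\<close>

definition rim_next :: "nat \<Rightarrow> nat \<Rightarrow> nat" where
  "rim_next n u = (if u \<in> {1..n} then if u = n then 1 else Suc u else u)"

definition rim_prev :: "nat \<Rightarrow> nat \<Rightarrow> nat" where
  "rim_prev n u = (if u \<in> {1..n} then if u = 1 then n else u - 1 else u)"

lemma rim_next_in: "u \<in> {1..n} \<Longrightarrow> rim_next n u \<in> {1..n}"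
  by (auto simp: rim_next_def)

lemma rim_prev_in: "u \<in> {1..n} \<Longrightarrow> rim_prev n u \<in> {1..n}"
  by (auto simp: rim_prev_def)

lemma rim_prev_next [simp]: "rim_prev n (rim_next n u) = u"
  by (auto simp: rim_next_def rim_prev_def)

lemma rim_neighbours_distinct:
  assumes "3 \<le> n" "w \<in> {1..n}"
  shows "rim_prev n w \<noteq> rim_next n w" "rim_prev n w \<noteq> w" "rim_next n w \<noteq> w"
    "rim_prev n w \<noteq> 0" "rim_next n w \<noteq> 0"
  using assms by (auto simp: rim_next_def rim_prev_def)

lemma wheel_mult_rim:
  assumes "3 \<le> n" "w \<in> {1..n}"
  shows "wheel_mult n w x = (if x = 0 \<or> x = rim_prev n w \<or> x = rim_next n w then 1 else 0)"
  using assms unfolding wheel_mult_def rim_next_def rim_prev_def by auto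

lemma degA_wheel:
  assumes "3 \<le> n" "w \<in> {1..n}" "finite F"
  shows "degA (wheel_mult n) F w =
    of_bool (0 \<in> F) + of_bool (rim_prev n w \<in> F) + of_bool (rim_next n w \<in> F)"
proof -
  have "degA (wheel_mult n) F w = (\<Sum>x\<in>F. of_bool (x = 0) + of_bool (x = rim_prev n w)
      + of_bool (x = rim_next n w))"
    unfolding degA_def using wheel_mult_rim[OF assms(1,2)] rim_neighbours_distinct[OF assms(1,2)]
    by (intro sum.cong) auto
  also have "\<dots> = of_bool (0 \<in> F) + of_bool (rim_prev n w \<in> F) + of_bool (rim_next n w \<in> F)"
    using assms(3) by (simp add: sum.distrib)
  finally show ?thesis .
qed

lemma degA_wheel_subset_rim:
  assumes "3 \<le> n" "w \<in> {1..n}" "F \<subseteq> {1..n}"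
  shows "degA (wheel_mult n) F w = of_bool (rim_prev n w \<in> F) + of_bool (rim_next n w \<in> F)"
proof -
  have "finite F" "0 \<notin> F"
    using assms(3) by (auto intro: finite_subset)
  then show ?thesis
    using degA_wheel[OF assms(1,2)] by simp
qed

lemma degA_wheel_all:
  assumes "3 \<le> n" "w \<in> {1..n}"
  shows "degA (wheel_mult n) {0..n} w = 3"
proof -
  have "rim_prev n w \<in> {1..n}" "rim_next n w \<in> {1..n}"
    using assms(2) by (rule rim_prev_in, rule rim_next_in)
  then show ?thesis
    using degA_wheel[OF assms] by simp
qed

lemma degA_wheel_rim:
  assumes "3 \<le> n" "w \<in> {1..n}"
  shows "degA (wheel_mult n) {1..n} w = 2"
proof -
  have "rim_prev n w \<in> {1..n}" "rim_next n w \<in> {1..n}"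
    using assms(2) by (rule rim_prev_in, rule rim_next_in)
  then show ?thesis
    using degA_wheel[OF assms] by simp
qed

lemma wheel_mult_rim_next:
  "wheel_mult n (rim_next n x) (rim_next n y) = wheel_mult n x y"
  unfolding wheel_mult_def rim_next_def by auto

lemma wheel_mult_funpow_rim_next:
  "wheel_mult n ((rim_next n ^^ k) x) ((rim_next n ^^ k) y) = wheel_mult n x y"
  by (induction k) (simp_all add: wheel_mult_rim_next)

lemma rim_next_permutes: "rim_next n permutes {1..n}"
  by (rule inj_imp_permutes) (auto simp: inj_on_def rim_next_def)

lemma funpow_rim_next:
  "b \<in> {1..n} \<Longrightarrow> b + d \<le> n \<Longrightarrow> (rim_next n ^^ d) b = b + d"
  by (induction d) (auto simp: rim_next_def)

lemma funpow_rim_next_last: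
  assumes "t \<in> {1..n}"
  shows "(rim_next n ^^ t) n = t"
  using assms
proof (induction t)
  case (Suc t)
  then show ?case
    by (cases "t = 0") (auto simp: rim_next_def)
qed simp

lemma rim_next_closed:
  assumes "X \<subseteq> {1..n}" "X \<noteq> {}" and closed: "\<forall>x\<in>X. rim_next n x \<in> X"
  shows "X = {1..n}"
proof -
  have iter: "(rim_next n ^^ d) x \<in> X" if "x \<in> X" for x d
    using that closed by (induction d) auto
  obtain b where "b \<in> X"
    using assms(2) by blast
  with assms(1) have "(rim_next n ^^ (n - b)) b = n"
    by (subst funpow_rim_next) auto
  with iter[OF \<open>b \<in> X\<close>] have "n \<in> X"
    by metis
  then have "u \<in> X" if "u \<in> {1..n}" for u
    using iter[of n u] funpow_rim_next_last[OF that] by simp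
  with assms(1) show ?thesis
    by blast
qed

lemma exists_rim_next_notin:
  assumes "X \<subseteq> {1..n}" "X \<noteq> {}" "X \<noteq> {1..n}"
  obtains x where "x \<in> X" "rim_next n x \<notin> X"
  using rim_next_closed[OF assms(1,2)] assms(3) by blast

lemma exists_rim_prev_notin:
  assumes "X \<subseteq> {1..n}" "X \<noteq> {}" "X \<noteq> {1..n}"
  obtains x where "x \<in> X" "rim_prev n x \<notin> X"
proof -
  obtain y where y: "y \<in> {1..n} - X" "rim_next n y \<notin> {1..n} - X"
    using exists_rim_next_notin[of "{1..n} - X" n] assms by blast
  have "rim_next n y \<in> {1..n}"
    using y(1) by (blast intro: rim_next_in)
  with y show ?thesis
    using that[of "rim_next n y"] by simp
qed

section \<open>Strongly recurrent configurations\<close>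

definition rim_arc :: "nat \<Rightarrow> nat \<Rightarrow> nat \<Rightarrow> nat set" where
  "rim_arc n a b = (if a \<le> b then {a..b} else {a..n} \<union> {1..b})"

lemma rim_arc_subset: "a \<in> {1..n} \<Longrightarrow> b \<in> {1..n} \<Longrightarrow> rim_arc n a b \<subseteq> {1..n}"
  by (auto simp: rim_arc_def)

lemma rim_arc_ends: "a \<in> {1..n} \<Longrightarrow> b \<in> {1..n} \<Longrightarrow> a \<in> rim_arc n a b \<and> b \<in> rim_arc n a b"
  by (auto simp: rim_arc_def)

lemma rim_arc_next:
  "a \<in> {1..n} \<Longrightarrow> b \<in> {1..n} \<Longrightarrow> u \<in> rim_arc n a b \<Longrightarrow> u \<noteq> b \<Longrightarrow> rim_next n u \<in> rim_arc n a b"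
  by (auto simp: rim_arc_def rim_next_def)

lemma rim_arc_prev:
  "a \<in> {1..n} \<Longrightarrow> b \<in> {1..n} \<Longrightarrow> u \<in> rim_arc n a b \<Longrightarrow> u \<noteq> a \<Longrightarrow> rim_prev n u \<in> rim_arc n a b"
  by (auto simp: rim_arc_def rim_prev_def)

lemma rim_arc_avoids:
  "v \<notin> {a, b} \<Longrightarrow> v \<notin> rim_arc n a b \<or> v \<notin> rim_arc n b a"
  by (auto simp: rim_arc_def)

lemma wheel_arc_forbidden:
  assumes n: "3 \<le> n" and ab: "a \<in> {1..n}" "b \<in> {1..n}" "a \<noteq> b"
    and ends: "d a \<le> 0" "d b \<le> 0" and le1: "\<forall>u\<in>rim_arc n a b. d u \<le> 1"
  shows "\<forall>u\<in>rim_arc n a b. d u < degA (wheel_mult n) (rim_arc n a b) u"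
proof
  fix u assume u: "u \<in> rim_arc n a b"
  have deg: "degA (wheel_mult n) (rim_arc n a b) u =
      of_bool (rim_prev n u \<in> rim_arc n a b) + of_bool (rim_next n u \<in> rim_arc n a b)"
    using degA_wheel_subset_rim[OF n _ rim_arc_subset[OF ab(1,2)]] u rim_arc_subset[OF ab(1,2)]
    by blast
  show "d u < degA (wheel_mult n) (rim_arc n a b) u"
    using ends le1 u ab rim_arc_next[OF ab(1,2) u] rim_arc_prev[OF ab(1,2) u]
    unfolding deg by (cases "u = a"; cases "u = b") auto
qed

(* A proper part F of the rim has a vertex whose successor is missing from F and one whose
   predecessor is; both have fewer than two neighbours in F, so both are the unique zero of d,
   which then has no neighbour in F at all. *)
lemma wheel_forbidden_eq_rim:
  assumes n: "3 \<le> n" and F: "F \<subseteq> {1..n}" "F \<noteq> {}"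
    and forbidden: "\<forall>u\<in>F. d u < degA (wheel_mult n) F u"
    and nonneg: "\<forall>u\<in>{1..n}. 0 \<le> d u" and one_zero: "card {u \<in> {1..n}. d u = 0} \<le> 1"
  shows "F = {1..n}"
proof (rule ccontr)
  assume "F \<noteq> {1..n}"
  then obtain x y where x: "x \<in> F" "rim_next n x \<notin> F" and y: "y \<in> F" "rim_prev n y \<notin> F"
    using exists_rim_next_notin[OF F] exists_rim_prev_notin[OF F] by metis
  have deg: "degA (wheel_mult n) F u =
      of_bool (rim_prev n u \<in> F) + of_bool (rim_next n u \<in> F)" if "u \<in> F" for u
    using degA_wheel_subset_rim[OF n _ F(1)] that F by blast
  have "d x < 1"
    using forbidden x deg[OF x(1)] by (cases "rim_prev n x \<in> F") auto
  moreover have "d y < 1"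
    using forbidden y deg[OF y(1)] by (cases "rim_next n y \<in> F") auto
  moreover have "x \<in> {1..n}" "y \<in> {1..n}"
    using x(1) y(1) F(1) by blast+
  ultimately have "d x = 0" "d y = 0"
    using nonneg by force+
  then have "x = y"
    using card_filter_le_1_unique[OF one_zero] \<open>x \<in> {1..n}\<close> \<open>y \<in> {1..n}\<close> by blast
  then have "d x < 0"
    using forbidden x y deg[OF x(1)] by auto
  with \<open>d x = 0\<close> show False
    by simp
qed

lemma wheel_cfg_minus:
  assumes "3 \<le> n"
  shows "cfg_minus {0..n} 0 (wheel_mult n) c v u = c u - of_bool (u \<in> {1..n} - {v})"
proof -
  have "(\<Sum>w\<in>{0..n} - {0} - {v}. int (wheel_mult n w 0) * (if u = w then 1 else 0))
      = (\<Sum>w\<in>{1..n} - {v}. if u = w then 1 else 0)"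
    using wheel_mult_rim[OF assms] by (intro sum.cong) auto
  then show ?thesis
    unfolding cfg_minus_def by simp
qed

lemma wheel_VM:
  assumes "3 \<le> n"
  shows "VM {0..n} 0 (wheel_mult n) c = {v \<in> {1..n}. 2 \<le> c v}"
  using degA_wheel_all[OF assms] wheel_mult_rim[OF assms] unfolding VM_def by auto

lemma wheel_recurrent_range:
  assumes n: "3 \<le> n" and rec: "recurrent_cfg {0..n} 0 (wheel_mult n) c" and v: "v \<in> {1..n}"
  shows "0 \<le> c v" "c v \<le> 2"
proof -
  have "wheel_mult n v v = 0"
    using n by (simp add: wheel_mult_def)
  with v show "0 \<le> c v"
    by (intro recurrent_cfg_nonneg[OF rec]) auto
  have "stable_cfg {0..n} 0 (wheel_mult n) c"
    using rec unfolding recurrent_cfg_def by blast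
  moreover have "v \<in> {0..n} - {0}"
    using v by auto
  ultimately have "c v < degA (wheel_mult n) {0..n} v"
    unfolding stable_cfg_def by blast
  with degA_wheel_all[OF n v] show "c v \<le> 2"
    by simp
qed

lemma wheel_recurrent_has_two:
  assumes n: "3 \<le> n" and rec: "recurrent_cfg {0..n} 0 (wheel_mult n) c"
  obtains v where "v \<in> {1..n}" "c v = 2"
proof -
  have "\<not> (\<forall>u\<in>{1..n}. c u < degA (wheel_mult n) {1..n} u)"
  proof
    assume "\<forall>u\<in>{1..n}. c u < degA (wheel_mult n) {1..n} u"
    moreover have "{1..n} \<noteq> {}" "{1..n} \<subseteq> {0..n} - {0}"
      using n by auto
    ultimately show False
      using rec unfolding recurrent_cfg_def by blast
  qed
  then obtain v where v: "v \<in> {1..n}" "\<not> c v < degA (wheel_mult n) {1..n} v"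
    by blast
  with degA_wheel_rim[OF n v(1)] wheel_recurrent_range(2)[OF n rec v(1)] have "c v = 2"
    by simp
  with v(1) that show ?thesis
    by blast
qed

lemma wheel_recurrent_cfgI:
  assumes n: "3 \<le> n" and range: "\<forall>u\<in>{1..n}. 0 \<le> d u \<and> d u \<le> 2"
    and one_zero: "card {u \<in> {1..n}. d u = 0} \<le> 1" and v: "v \<in> {1..n}" "d v = 2"
  shows "recurrent_cfg {0..n} 0 (wheel_mult n) d"
  unfolding recurrent_cfg_def
proof (intro conjI notI)
  have "d u < degA (wheel_mult n) {0..n} u" if "u \<in> {1..n}" for u
    using range degA_wheel_all[OF n that] that by fastforce
  then show "stable_cfg {0..n} 0 (wheel_mult n) d"
    unfolding stable_cfg_def by auto
next
  assume "\<exists>F. F \<noteq> {} \<and> F \<subseteq> {0..n} - {0} \<and> (\<forall>u\<in>F. d u < degA (wheel_mult n) F u)"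
  then obtain F where F: "F \<noteq> {}" "F \<subseteq> {0..n} - {0}" "\<forall>u\<in>F. d u < degA (wheel_mult n) F u"
    by blast
  have "{0..n} - {0} = {1..n}"
    by auto
  with F have "F = {1..n}"
    using wheel_forbidden_eq_rim[OF n _ F(1) F(3)] range one_zero by blast
  with F(3) v(1) have "d v < degA (wheel_mult n) {1..n} v"
    by blast
  with v(2) degA_wheel_rim[OF n v(1)] show False
    by simp
qed

(* Two 1's of c are two zeros of c^{v-}, and the rim arc joining them that avoids v is
   forbidden. *)
lemma wheel_card_ones_le_1:
  assumes n: "3 \<le> n" and v: "v \<in> {1..n}" "c v = 2" and c_range: "\<forall>i\<in>{1..n}. c i \<in> {1, 2}"
    and rec_v: "recurrent_cfg {0..n} 0 (wheel_mult n) (cfg_minus {0..n} 0 (wheel_mult n) c v)"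
  shows "card {i \<in> {1..n}. c i = 1} \<le> 1"
proof (rule ccontr)
  let ?d = "cfg_minus {0..n} 0 (wheel_mult n) c v"
  have d: "?d u = c u - of_bool (u \<in> {1..n} - {v})" for u
    by (rule wheel_cfg_minus[OF n])
  have c_in: "c i = 1 \<or> c i = 2" if "i \<in> {1..n}" for i
    using c_range that by blast
  assume "\<not> card {i \<in> {1..n}. c i = 1} \<le> 1"
  then obtain a b where ab: "a \<in> {1..n}" "b \<in> {1..n}" "a \<noteq> b" "c a = 1" "c b = 1"
    by (auto simp: card_le_Suc0_iff_eq)
  have "v \<notin> {a, b}"
    using ab v by auto
  moreover have "\<forall>u\<in>rim_arc n x y. ?d u < degA (wheel_mult n) (rim_arc n x y) u"
    if "{x, y} = {a, b}" "v \<notin> rim_arc n x y" for x y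
  proof (rule wheel_arc_forbidden[OF n])
    show "x \<in> {1..n}" "y \<in> {1..n}" "x \<noteq> y" "?d x \<le> 0" "?d y \<le> 0"
      using that ab v d by (auto simp: doubleton_eq_iff)
    show "\<forall>u\<in>rim_arc n x y. ?d u \<le> 1"
      using that c_in rim_arc_subset[of x n y] ab d by (force simp: doubleton_eq_iff)
  qed
  ultimately obtain x y where "{x, y} = {a, b}" and
    "\<forall>u\<in>rim_arc n x y. ?d u < degA (wheel_mult n) (rim_arc n x y) u"
    using rim_arc_avoids by (metis insert_commute)
  moreover have "x \<in> {1..n}" "y \<in> {1..n}"
    using ab \<open>{x, y} = {a, b}\<close> by (auto simp: doubleton_eq_iff)
  then have "rim_arc n x y \<noteq> {}" "rim_arc n x y \<subseteq> {0..n} - {0}"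
    using rim_arc_ends rim_arc_subset by fastforce+
  ultimately show False
    using rec_v unfolding recurrent_cfg_def by blast
qed

lemma wheel_strongly_recurrentD:
  assumes n: "3 \<le> n" and sr: "strongly_recurrent {0..n} 0 (wheel_mult n) c"
  shows "(\<forall>i\<in>{1..n}. c i \<in> {1, 2}) \<and> card {i \<in> {1..n}. c i = 1} \<le> 1"
proof -
  let ?d = "cfg_minus {0..n} 0 (wheel_mult n) c"
  have rec: "recurrent_cfg {0..n} 0 (wheel_mult n) c"
    using sr unfolding strongly_recurrent_def by blast
  obtain v where v: "v \<in> {1..n}" "c v = 2"
    using wheel_recurrent_has_two[OF n rec] .
  then have rec_v: "recurrent_cfg {0..n} 0 (wheel_mult n) (?d v)"
    using sr unfolding strongly_recurrent_def wheel_VM[OF n] by auto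
  have "c i \<in> {1, 2}" if "i \<in> {1..n}" for i
    using wheel_recurrent_range[OF n rec that] wheel_recurrent_range(1)[OF n rec_v that]
      wheel_cfg_minus[OF n, of c v i] v that
    by (cases "i = v") auto
  with wheel_card_ones_le_1[OF n v _ rec_v] show ?thesis
    by blast
qed

lemma wheel_recurrent_cfg_minusI:
  assumes n: "3 \<le> n" and c_range: "\<forall>i\<in>{1..n}. c i \<in> {1, 2}"
    and one: "card {i \<in> {1..n}. c i = 1} \<le> 1" and v: "v \<in> {1..n}" "c v = 2"
  shows "recurrent_cfg {0..n} 0 (wheel_mult n) (cfg_minus {0..n} 0 (wheel_mult n) c v)"
proof -
  let ?d = "cfg_minus {0..n} 0 (wheel_mult n) c v"
  have d: "?d u = c u - of_bool (u \<in> {1..n} - {v})" for u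
    by (rule wheel_cfg_minus[OF n])
  have c_in: "c i = 1 \<or> c i = 2" if "i \<in> {1..n}" for i
    using c_range that by blast
  have "{u \<in> {1..n}. ?d u = 0} \<subseteq> {i \<in> {1..n}. c i = 1}"
    using c_in \<open>c v = 2\<close> unfolding d by fastforce
  then have "card {u \<in> {1..n}. ?d u = 0} \<le> card {i \<in> {1..n}. c i = 1}"
    by (intro card_mono) auto
  with one have "card {u \<in> {1..n}. ?d u = 0} \<le> 1"
    by linarith
  moreover have "0 \<le> ?d u \<and> ?d u \<le> 2" if "u \<in> {1..n}" for u
    using c_in[OF that] unfolding d by auto
  moreover have "?d v = 2"
    using \<open>c v = 2\<close> unfolding d by simp
  ultimately show ?thesis
    by (intro wheel_recurrent_cfgI[OF n _ _ v(1)]) auto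
qed

lemma wheel_strongly_recurrentI:
  assumes n: "3 \<le> n" and c_range: "\<forall>i\<in>{1..n}. c i \<in> {1, 2}"
    and one: "card {i \<in> {1..n}. c i = 1} \<le> 1"
  shows "strongly_recurrent {0..n} 0 (wheel_mult n) c"
proof -
  have c_in: "c i = 1 \<or> c i = 2" if "i \<in> {1..n}" for i
    using c_range that by blast
  have "\<exists>v\<in>{1..n}. c v = 2"
  proof (rule ccontr)
    assume "\<not> (\<exists>v\<in>{1..n}. c v = 2)"
    with c_in have "{i \<in> {1..n}. c i = 1} = {1..n}"
      by blast
    with one n show False
      by simp
  qed
  then obtain v where "v \<in> {1..n}" "c v = 2"
    by blast
  moreover have "{u \<in> {1..n}. c u = 0} = {}"
    using c_in by fastforce
  then have "card {u \<in> {1..n}. c u = 0} \<le> 1"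
    by (simp only: card.empty)
  moreover have "\<forall>u\<in>{1..n}. 0 \<le> c u \<and> c u \<le> 2"
    using c_in by fastforce
  ultimately have "recurrent_cfg {0..n} 0 (wheel_mult n) c"
    by (intro wheel_recurrent_cfgI[OF n]) auto
  moreover have "recurrent_cfg {0..n} 0 (wheel_mult n) (cfg_minus {0..n} 0 (wheel_mult n) c v)"
    if "v \<in> VM {0..n} 0 (wheel_mult n) c" for v
  proof -
    from that have v: "v \<in> {1..n}" "2 \<le> c v"
      unfolding wheel_VM[OF n] by auto
    with c_in have "c v = 2"
      by fastforce
    with v(1) show ?thesis
      by (rule wheel_recurrent_cfg_minusI[OF n c_range one])
  qed
  ultimately show ?thesis
    unfolding strongly_recurrent_def by blast
qed

lemma wheel_strongly_recurrent_iff: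
  assumes "3 \<le> n"
  shows "strongly_recurrent {0..n} 0 (wheel_mult n) c \<longleftrightarrow>
    (\<forall>i\<in>{1..n}. c i \<in> {1, 2}) \<and> card {i \<in> {1..n}. c i = 1} \<le> 1"
  using wheel_strongly_recurrentD[OF assms] wheel_strongly_recurrentI[OF assms] by blast

section \<open>Prime parking functions\<close>

lemma wheel_parking_has_one:
  assumes n: "3 \<le> n" and park: "parking_fn {0..n} 0 (wheel_mult n) p"
  obtains v where "v \<in> {1..n}" "p v = 1"
proof -
  have "{1..n} \<noteq> {}" "{1..n} \<subseteq> {0..n} - {0}"
    using n by auto
  then obtain v where v: "v \<in> {1..n}" "p v \<le> degA (wheel_mult n) ({0..n} - {1..n}) v"
    using park unfolding parking_fn_def by blast
  moreover have "{0..n} - {1..n} = {0}"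
    by auto
  moreover have "1 \<le> p v"
    using park v(1) unfolding parking_fn_def by auto
  ultimately show ?thesis
    using that wheel_mult_rim[OF n v(1), of 0] by (simp add: degA_def)
qed

(* p restricted to a run of 1's is parking because every rim vertex sees the sink; the vertices
   flanking the run have one neighbour in it and p >= 2, except when the run is 1..n-1 and both
   flanks are the vertex n. *)
lemma wheel_decomposable_at_run:
  assumes n: "3 \<le> n" and park: "parking_fn {0..n} 0 (wheel_mult n) p" and last: "p n \<noteq> 1"
    and run: "1 \<le> j" "j \<le> k" "k < n" "\<forall>l\<in>{j..k}. p l = 1"
    and maximal: "p (Suc k) \<noteq> 1" "j = 1 \<or> p (j - 1) \<noteq> 1"
    and not_all: "\<not> (j = 1 \<and> k = n - 1 \<and> p n = 2)"
  shows "decomposable {0..n} 0 (wheel_mult n) p {j..k} ({1..n} - {j..k})"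
proof (rule decomposableI)
  show "parking_fn ({j..k} \<union> {0}) 0 (wheel_mult n) p"
    using run wheel_mult_rim[OF n] by (intro parking_fn_le_mult_sinkI) auto
  show "\<forall>v\<in>{1..n} - {j..k}. 1 \<le> p v - degA (wheel_mult n) {j..k} v"
  proof
    fix v assume v: "v \<in> {1..n} - {j..k}"
    have p_ge: "1 \<le> p v"
      using park v unfolding parking_fn_def by auto
    have deg: "degA (wheel_mult n) {j..k} v =
        of_bool (rim_prev n v \<in> {j..k}) + of_bool (rim_next n v \<in> {j..k})"
      using degA_wheel_subset_rim[OF n] v run by auto
    show "1 \<le> p v - degA (wheel_mult n) {j..k} v"
    proof (cases "v = n")
      case True
      then have "rim_prev n v = n - 1" "rim_next n v = 1"
        using n by (auto simp: rim_prev_def rim_next_def)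
      with True p_ge last not_all run show ?thesis
        unfolding deg by auto
    next
      case False
      with v have prev_eq: "rim_prev n v = (if v = 1 then n else v - 1)" and next_eq: "rim_next n v = Suc v"
        by (auto simp: rim_prev_def rim_next_def)
      have after_run: "v = Suc k" if "rim_prev n v \<in> {j..k}"
        using v run that unfolding prev_eq by (auto split: if_splits)
      have before_run: "Suc v = j" if "rim_next n v \<in> {j..k}"
        using v that unfolding next_eq by auto
      have "\<not> (rim_prev n v \<in> {j..k} \<and> rim_next n v \<in> {j..k})"
        using after_run before_run run(2) by fastforce
      moreover have "p v \<noteq> 1" if "v = Suc k \<or> Suc v = j"
        using that maximal v by auto
      then have "2 \<le> p v" if "rim_prev n v \<in> {j..k} \<or> rim_next n v \<in> {j..k}"
        using that after_run before_run p_ge by fastforce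
      ultimately show ?thesis
        unfolding deg using p_ge
        by (cases "rim_prev n v \<in> {j..k}"; cases "rim_next n v \<in> {j..k}")
          (simp_all del: atLeastAtMost_iff)
    qed
  qed
qed (use n run park in auto)

lemma wheel_prime_parking_last:
  assumes n: "3 \<le> n" and prime: "prime_parking_fn {0..n} 0 (wheel_mult n) p" and last: "p n \<noteq> 1"
  shows "p n = 2" "\<forall>i\<in>{1..<n}. p i = 1"
proof -
  have park: "parking_fn {0..n} 0 (wheel_mult n) p"
    using prime unfolding prime_parking_fn_def by blast
  obtain v where v: "v \<in> {1..n}" "p v = 1"
    using wheel_parking_has_one[OF n park] .
  with last have "v < n"
    by (cases "v = n") auto
  obtain j k where run: "1 \<le> j" "j \<le> k" "k < n" "\<forall>l\<in>{j..k}. p l = 1"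
    and maximal: "p (Suc k) \<noteq> 1" "j = 1 \<or> p (j - 1) \<noteq> 1"
    by (rule exists_maximal_run[of "\<lambda>i. p i = 1" v n]) (use v last \<open>v < n\<close> in auto)
  have "j = 1 \<and> k = n - 1 \<and> p n = 2"
  proof (rule ccontr)
    assume "\<not> (j = 1 \<and> k = n - 1 \<and> p n = 2)"
    from wheel_decomposable_at_run[OF n park last run maximal this] show False
      using prime unfolding prime_parking_fn_def by blast
  qed
  with run show "p n = 2" "\<forall>i\<in>{1..<n}. p i = 1"
    by auto
qed

lemma wheel_prime_parking_non_one:
  assumes n: "3 \<le> n" and prime: "prime_parking_fn {0..n} 0 (wheel_mult n) p"
    and t: "t \<in> {1..n}" "p t \<noteq> 1"
  shows "p t = 2" "\<forall>i\<in>{1..n} - {t}. p i = 1"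
proof -
  define \<tau> where "\<tau> = rim_next n ^^ t"
  have perm: "\<tau> permutes {1..n}"
    unfolding \<tau>_def by (rule permutes_funpow[OF rim_next_permutes])
  have "{0..n} - {0} = {1..n}"
    by auto
  with perm have prime_\<tau>: "prime_parking_fn {0..n} 0 (wheel_mult n) (p \<circ> \<tau>)"
    using prime_parking_fn_comp_permutes[OF _ _ prime] wheel_mult_funpow_rim_next
    unfolding \<tau>_def by metis
  have "\<tau> n = t"
    unfolding \<tau>_def by (rule funpow_rim_next_last[OF t(1)])
  with t(2) have "(p \<circ> \<tau>) n \<noteq> 1"
    by simp
  note rotated = wheel_prime_parking_last[OF n prime_\<tau> this]
  from rotated(1) have "(p \<circ> \<tau>) n = 2" and rest: "\<forall>i\<in>{1..<n}. (p \<circ> \<tau>) i = 1"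
    using rotated(2) by blast+
  with \<open>\<tau> n = t\<close> show "p t = 2"
    by simp
  show "\<forall>i\<in>{1..n} - {t}. p i = 1"
  proof
    fix i assume i: "i \<in> {1..n} - {t}"
    then obtain i' where "i' \<in> {1..n}" "\<tau> i' = i"
      using permutes_image[OF perm] by (metis DiffD1 imageE)
    with i \<open>\<tau> n = t\<close> rest show "p i = 1"
      by (cases "i' = n") auto
  qed
qed

lemma wheel_parking_fnI:
  assumes n: "3 \<le> n" and p_range: "\<forall>i\<in>{1..n}. p i \<in> {1, 2}"
    and two: "card {i \<in> {1..n}. p i = 2} \<le> 1"
  shows "parking_fn {0..n} 0 (wheel_mult n) p"
  unfolding parking_fn_def
proof (intro conjI allI impI ballI)
  fix v assume "v \<in> {0..n} - {0}"
  then have "p v \<in> {1, 2}"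
    using p_range by auto
  then show "1 \<le> p v"
    by auto
next
  fix S assume S: "S \<noteq> {} \<and> S \<subseteq> {0..n} - {0}"
  then have S_rim: "S \<subseteq> {1..n}"
    by auto
  have sink: "1 \<le> degA (wheel_mult n) ({0..n} - S) u" if "u \<in> S" for u
  proof -
    have "u \<in> {1..n}" "0 \<in> {0..n} - S"
      using S that by auto
    then show ?thesis
      using degA_wheel[OF n] by simp
  qed
  show "\<exists>v\<in>S. p v \<le> degA (wheel_mult n) ({0..n} - S) v"
  proof (cases "\<exists>u\<in>S. p u = 1")
    case True
    then obtain u where "u \<in> S" "p u = 1"
      by blast
    with sink[OF \<open>u \<in> S\<close>] have "p u \<le> degA (wheel_mult n) ({0..n} - S) u"
      by simp
    with \<open>u \<in> S\<close> show ?thesis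
      by blast
  next
    case False
    obtain v where v: "v \<in> S"
      using S by blast
    have two_on_S: "p u = 2" if "u \<in> S" for u
      using False that p_range S_rim by blast
    have "u = v" if "u \<in> S" for u
      using card_filter_le_1_unique[OF two, of u v] that v S_rim two_on_S by blast
    with v have "S = {v}"
      by blast
    have "v \<in> {1..n}" "p v = 2"
      using v S_rim two_on_S by blast+
    then have "rim_prev n v \<in> {0..n} - S" "rim_next n v \<in> {0..n} - S" "0 \<in> {0..n} - S"
      using \<open>S = {v}\<close> rim_prev_in[OF \<open>v \<in> {1..n}\<close>] rim_next_in[OF \<open>v \<in> {1..n}\<close>]
        rim_neighbours_distinct[OF n \<open>v \<in> {1..n}\<close>] by auto
    then have "degA (wheel_mult n) ({0..n} - S) v = 3"
      using degA_wheel[OF n \<open>v \<in> {1..n}\<close>] by simp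
    with \<open>p v = 2\<close> have "p v \<le> degA (wheel_mult n) ({0..n} - S) v"
      by simp
    with v show ?thesis
      by blast
  qed
qed

lemma wheel_not_decomposable:
  assumes n: "3 \<le> n" and p_range: "\<forall>i\<in>{1..n}. p i \<in> {1, 2}"
    and two: "card {i \<in> {1..n}. p i = 2} \<le> 1"
  shows "\<not> decomposable {0..n} 0 (wheel_mult n) p A B"
proof
  assume "decomposable {0..n} 0 (wheel_mult n) p A B"
  moreover have "{0..n} - {0} = {1..n}"
    by auto
  ultimately have AB: "A \<noteq> {}" "B \<noteq> {}" "A \<inter> B = {}" "A \<union> B = {1..n}"
    and park_B: "parking_fn (B \<union> {0}) 0 (wheel_mult n) (\<lambda>v. p v - degA (wheel_mult n) A v)"
    unfolding decomposable_def by metis+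
  have A: "A \<subseteq> {1..n}" and B: "B \<subseteq> {1..n}" "B \<noteq> {1..n}"
    using AB by blast+
  have pos: "1 \<le> p v - degA (wheel_mult n) A v" if "v \<in> B" for v
  proof -
    have "v \<in> B \<union> {0} - {0}"
      using that B by auto
    with park_B show ?thesis
      unfolding parking_fn_def by blast
  qed
  have deg: "degA (wheel_mult n) A u = of_bool (rim_prev n u \<in> A) + of_bool (rim_next n u \<in> A)"
    if "u \<in> B" for u
    using degA_wheel_subset_rim[OF n _ A] that B(1) by blast
  have two_if_neighbour: "p u = 2" if "u \<in> B" "rim_prev n u \<in> A \<or> rim_next n u \<in> A" for u
  proof -
    have "1 \<le> degA (wheel_mult n) A u"
      using deg[OF that(1)] that(2) by auto
    with pos[OF that(1)] p_range that(1) B(1) show ?thesis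
      by force
  qed
  obtain x where x: "x \<in> B" "rim_next n x \<notin> B"
    using exists_rim_next_notin[OF B(1) AB(2) B(2)] by blast
  obtain y where y: "y \<in> B" "rim_prev n y \<notin> B"
    using exists_rim_prev_notin[OF B(1) AB(2) B(2)] by blast
  have "x \<in> {1..n}" "y \<in> {1..n}"
    using x(1) y(1) B(1) by blast+
  then have "rim_next n x \<in> A" "rim_prev n y \<in> A"
    using x(2) y(2) rim_next_in[of x n] rim_prev_in[of y n] AB(4) by blast+
  then have "p x = 2" "p y = 2"
    using two_if_neighbour x(1) y(1) by blast+
  then have "x = y"
    using card_filter_le_1_unique[OF two] \<open>x \<in> {1..n}\<close> \<open>y \<in> {1..n}\<close> by blast
  with \<open>rim_next n x \<in> A\<close> \<open>rim_prev n y \<in> A\<close> have "degA (wheel_mult n) A x = 2"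
    using deg[OF x(1)] by simp
  with pos[OF x(1)] \<open>p x = 2\<close> show False
    by simp
qed

lemma wheel_prime_parking_iff:
  assumes "3 \<le> n"
  shows "prime_parking_fn {0..n} 0 (wheel_mult n) p \<longleftrightarrow>
    (\<forall>i\<in>{1..n}. p i \<in> {1, 2}) \<and> card {i \<in> {1..n}. p i = 2} \<le> 1"
proof
  assume prime: "prime_parking_fn {0..n} 0 (wheel_mult n) p"
  note non_one = wheel_prime_parking_non_one[OF assms prime]
  have "p i \<in> {1, 2}" if "i \<in> {1..n}" for i
    using non_one(1)[OF that] by (cases "p i = 1") auto
  moreover have "x = y" if "x \<in> {1..n}" "y \<in> {1..n}" "p x = 2" "p y = 2" for x y
  proof (rule ccontr)
    assume "x \<noteq> y"
    with non_one(2)[OF that(1)] that have "p y = 1"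
      by simp
    with that(4) show False
      by simp
  qed
  then have "card {i \<in> {1..n}. p i = 2} \<le> 1"
    by (auto simp: card_le_Suc0_iff_eq)
  ultimately show "(\<forall>i\<in>{1..n}. p i \<in> {1, 2}) \<and> card {i \<in> {1..n}. p i = 2} \<le> 1"
    by blast
next
  assume "(\<forall>i\<in>{1..n}. p i \<in> {1, 2}) \<and> card {i \<in> {1..n}. p i = 2} \<le> 1"
  then show "prime_parking_fn {0..n} 0 (wheel_mult n) p"
    using wheel_parking_fnI[OF assms] wheel_not_decomposable[OF assms]
    unfolding prime_parking_fn_def by blast
qed

theorem proposition3p3:
  fixes n :: nat
  assumes "n \<ge> 3"
  shows "(\<forall>c :: nat \<Rightarrow> int. strongly_recurrent {0..n} 0 (wheel_mult n) c \<longleftrightarrow>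
            (\<forall>i\<in>{1..n}. c i \<in> {1, 2}) \<and> card {i \<in> {1..n}. c i = 1} \<le> 1)
         \<and> card (SR {0..n} 0 (wheel_mult n)) = n + 1
         \<and> card (PPF {0..n} 0 (wheel_mult n)) = n + 1"
proof -
  have rim: "{0..n} - {0} = {1..n}"
    by auto
  have "SR {0..n} 0 (wheel_mult n) = {c. (\<forall>i\<in>{1..n}. c i \<in> {1, 2})
      \<and> card {i \<in> {1..n}. c i = 1} \<le> 1 \<and> (\<forall>u. u \<notin> {1..n} \<longrightarrow> c u = 0)}"
    unfolding SR_def rim wheel_strongly_recurrent_iff[OF assms] by (simp only: conj_assoc)
  moreover have "PPF {0..n} 0 (wheel_mult n) = {p. (\<forall>i\<in>{1..n}. p i \<in> {2, 1})
      \<and> card {i \<in> {1..n}. p i = 2} \<le> 1 \<and> (\<forall>u. u \<notin> {1..n} \<longrightarrow> p u = 0)}"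
    unfolding PPF_def rim wheel_prime_parking_iff[OF assms] insert_commute[of 2 1]
    by (simp only: conj_assoc)
  ultimately show ?thesis
    using wheel_strongly_recurrent_iff[OF assms]
      card_functions_at_most_one_value[of "{1..n}" "1 :: int" 2]
      card_functions_at_most_one_value[of "{1..n}" "2 :: int" 1]
    by simp
qed

end
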